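(* Let $X,Y,P$ be Banach spaces, $F:X\times P\rightrightarrows Y$ and $G:X\rightrightarrows Y$ set-valued maps and $(\overline{x},\overline{p},\overline{y})\in X\times P\times Y$ with $\overline{y}\in F(\overline{x},\overline{p})$ and $-\overline{y}\in G(\overline{x})$. Let $S:P\rightrightarrows X$, $S(p)=\{x\in X: 0\in F(x,p)+G(x)\}$. Suppose: (i) $(F,G)$ is locally sum-stable around $(\overline{x},\overline{p},\overline{y},-\overline{y})$; (ii) for every $p$ in a neighborhood of $\overline{p}$, $\operatorname{Gr}F(\cdot,p)$ is closed; (iii) $\operatorname{Gr}G$ is closed; (iv) $F$ is Lipschitz-like around $((\overline{x},\overline{p}),\overline{y})$; (v) $G$ is metrically regular around $(\overline{x},-\overline{y})$; (vi) $G$ is inner semicontinuous at $(\overline{x},-\overline{y})$; (vii) $\widehat{\operatorname{lip}}_xF((\overline{x},\overline{p}),\overline{y})\cdot\operatorname{reg}G(\overline{x},-\overline{y})<1$. Then $S$ is Lipschitz-like around $(\overline{p},\overline{x})$ and \[ \operatorname{lip}S(\overline{p},\overline{x})\le\frac{\operatorname{reg}G(\overline{x},-\overline{y})\cdot\widehat{\operatorname{lip}}_pF((\overline{x},\overline{p}),\overline{y})}{1-\widehat{\operatorname{lip}}_xF((\overline{x},\overline{p}),\overline{y})\cdot\operatorname{reg}G(\overline{x},-\overline{y})}. \]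
   Context: $B$ open balls, $\mathbb{D}_Y$ closed unit ball, $d(x,A)=\inf_{a\in A}\|x-a\|$, $d(x,\emptyset)=\infty$; $X\times P$ carries the sum norm. Write $F_p=F(\cdot,p)$. $(F,G)$ is locally sum-stable around $(\overline{x},\overline{p},\overline{y},\overline{z})$ (where $\overline{y}\in F(\overline{x},\overline{p})$, $\overline{z}\in G(\overline{x})$) if for every $\varepsilon>0$ there is $\delta>0$ such that for every $(x,p)\in B(\overline{x},\delta)\times B(\overline{p},\delta)$ and every $w\in(F_p+G)(x)\cap B(\overline{y}+\overline{z},\delta)$ there exist $y\in F_p(x)\cap B(\overline{y},\varepsilon)$ and $z\in G(x)\cap B(\overline{z},\varepsilon)$ with $w=y+z$. A multifunction $T:A\rightrightarrows B$ is Lipschitz-like around $(\overline{a},\overline{b})\in\operatorname{Gr}T$ with constant $L>0$ if there are neighborhoods $U$ of $\overline{a}$, $V$ of $\overline{b}$ with $T(a)\cap V\subset T(u)+L\|a-u\|\mathbb{D}_B$ for all $a,u\in U$ ($\operatorname{lip}T(\overline{a},\overline{b})$ the infimum of such $L$); $T$ is metrically regular around $(\overline{a},\overline{b})$ with constant $L$ if there are neighborhoods $U,V$ with $d(a,T^{-1}(b))\le L\,d(b,T(a))$ for all $(a,b)\in U\times V$ ($\operatorname{reg}T(\overline{a},\overline{b})$ the infimum of such $L$); $T$ is inner semicontinuous at $(\overline{a},\overline{b})$ if for every open $D\ni\overline{b}$ there is a neighborhood $U$ of $\overline{a}$ with $T(a)\cap D\ne\emptyset$ for all $a\in U$. $\widehat{\operatorname{lip}}_xF((\overline{x},\overline{p}),\overline{y})$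 is the infimum of $L>0$ for which there are neighborhoods $U$ of $\overline{x}$, $V$ of $\overline{p}$, $W$ of $\overline{y}$ with $F(x,p)\cap W\subset F(u,p)+L\|x-u\|\mathbb{D}_Y$ for all $x,u\in U$, $p\in V$; $\widehat{\operatorname{lip}}_pF((\overline{x},\overline{p}),\overline{y})$ is the infimum of $L>0$ for which there are such neighborhoods with $F(x,p)\cap W\subset F(x,q)+L\|p-q\|\mathbb{D}_Y$ for all $x\in U$, $p,q\in V$. *)

theory Defs
  imports "HOL-Analysis.Analysis"
begin

definition graph :: "('a \<Rightarrow> 'b set) \<Rightarrow> ('a \<times> 'b) set" where
  "graph T = {(a, b). b \<in> T a}"

definition inverse_mf :: "('a \<Rightarrow> 'b set) \<Rightarrow> 'b \<Rightarrow> 'a set" where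
  "inverse_mf T b = {a. b \<in> T a}"

definition lip_like_const ::
  "('a::real_normed_vector \<Rightarrow> 'b::real_normed_vector set) \<Rightarrow> 'a \<Rightarrow> 'b \<Rightarrow> real \<Rightarrow> bool" where
  "lip_like_const T a0 b0 L \<longleftrightarrow> L > 0 \<and>
     (\<exists>U V. open U \<and> a0 \<in> U \<and> open V \<and> b0 \<in> V \<and>
        (\<forall>a\<in>U. \<forall>u\<in>U. \<forall>y\<in>T a \<inter> V. \<exists>w\<in>T u. norm (y - w) \<le> L * norm (a - u)))"

definition lipschitz_like ::
  "('a::real_normed_vector \<Rightarrow> 'b::real_normed_vector set) \<Rightarrow> 'a \<Rightarrow> 'b \<Rightarrow> bool" where
  "lipschitz_like T a0 b0 \<longleftrightarrow> b0 \<in> T a0 \<and> (\<exists>L. lip_like_const T a0 b0 L)"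

definition lip_mod ::
  "('a::real_normed_vector \<Rightarrow> 'b::real_normed_vector set) \<Rightarrow> 'a \<Rightarrow> 'b \<Rightarrow> real" where
  "lip_mod T a0 b0 = Inf {L. lip_like_const T a0 b0 L}"

(* Lipschitz-like for F : X \<times> P \<rightrightarrows> Y, where X \<times> P carries the SUM norm *)
definition lip_like_const2 ::
  "('x::real_normed_vector \<times> 'p::real_normed_vector \<Rightarrow> 'y::real_normed_vector set)
     \<Rightarrow> 'x \<times> 'p \<Rightarrow> 'y \<Rightarrow> real \<Rightarrow> bool" where
  "lip_like_const2 F a0 b0 L \<longleftrightarrow> L > 0 \<and>
     (\<exists>U V. open U \<and> a0 \<in> U \<and> open V \<and> b0 \<in> V \<and>
        (\<forall>a\<in>U. \<forall>u\<in>U. \<forall>y\<in>F a \<inter> V. \<exists>w\<in>F u.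
            norm (y - w) \<le> L * (norm (fst a - fst u) + norm (snd a - snd u))))"

definition lipschitz_like2 ::
  "('x::real_normed_vector \<times> 'p::real_normed_vector \<Rightarrow> 'y::real_normed_vector set)
     \<Rightarrow> 'x \<times> 'p \<Rightarrow> 'y \<Rightarrow> bool" where
  "lipschitz_like2 F a0 b0 \<longleftrightarrow> b0 \<in> F a0 \<and> (\<exists>L. lip_like_const2 F a0 b0 L)"

(* metric regularity with constant L; d(x,{}) = \<infinity> handled explicitly *)
definition met_reg_const ::
  "('a::real_normed_vector \<Rightarrow> 'b::real_normed_vector set) \<Rightarrow> 'a \<Rightarrow> 'b \<Rightarrow> real \<Rightarrow> bool" where
  "met_reg_const T a0 b0 L \<longleftrightarrow> L > 0 \<and>
     (\<exists>U V. open U \<and> a0 \<in> U \<and> open V \<and> b0 \<in> V \<and>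
        (\<forall>a\<in>U. \<forall>b\<in>V. T a \<noteq> {} \<longrightarrow>
            (inverse_mf T b \<noteq> {} \<and> infdist a (inverse_mf T b) \<le> L * infdist b (T a))))"

definition metrically_regular ::
  "('a::real_normed_vector \<Rightarrow> 'b::real_normed_vector set) \<Rightarrow> 'a \<Rightarrow> 'b \<Rightarrow> bool" where
  "metrically_regular T a0 b0 \<longleftrightarrow> b0 \<in> T a0 \<and> (\<exists>L. met_reg_const T a0 b0 L)"

definition reg_mod ::
  "('a::real_normed_vector \<Rightarrow> 'b::real_normed_vector set) \<Rightarrow> 'a \<Rightarrow> 'b \<Rightarrow> real" where
  "reg_mod T a0 b0 = Inf {L. met_reg_const T a0 b0 L}"

definition inner_semicontinuous ::
  "('a::topological_space \<Rightarrow> 'b::topological_space set) \<Rightarrow> 'a \<Rightarrow> 'b \<Rightarrow> bool" where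
  "inner_semicontinuous T a0 b0 \<longleftrightarrow>
     (\<forall>D. open D \<and> b0 \<in> D \<longrightarrow> (\<exists>U. open U \<and> a0 \<in> U \<and> (\<forall>a\<in>U. T a \<inter> D \<noteq> {})))"

definition lipx_const ::
  "('x::real_normed_vector \<times> 'p::real_normed_vector \<Rightarrow> 'y::real_normed_vector set)
     \<Rightarrow> 'x \<Rightarrow> 'p \<Rightarrow> 'y \<Rightarrow> real \<Rightarrow> bool" where
  "lipx_const F x0 p0 y0 L \<longleftrightarrow> L > 0 \<and>
     (\<exists>U V W. open U \<and> x0 \<in> U \<and> open V \<and> p0 \<in> V \<and> open W \<and> y0 \<in> W \<and>
        (\<forall>x\<in>U. \<forall>u\<in>U. \<forall>p\<in>V. \<forall>y\<in>F (x, p) \<inter> W. \<exists>w\<in>F (u, p). norm (y - w) \<le> L * norm (x - u)))"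

definition lipx_hat ::
  "('x::real_normed_vector \<times> 'p::real_normed_vector \<Rightarrow> 'y::real_normed_vector set)
     \<Rightarrow> 'x \<Rightarrow> 'p \<Rightarrow> 'y \<Rightarrow> real" where
  "lipx_hat F x0 p0 y0 = Inf {L. lipx_const F x0 p0 y0 L}"

definition lipp_const ::
  "('x::real_normed_vector \<times> 'p::real_normed_vector \<Rightarrow> 'y::real_normed_vector set)
     \<Rightarrow> 'x \<Rightarrow> 'p \<Rightarrow> 'y \<Rightarrow> real \<Rightarrow> bool" where
  "lipp_const F x0 p0 y0 L \<longleftrightarrow> L > 0 \<and>
     (\<exists>U V W. open U \<and> x0 \<in> U \<and> open V \<and> p0 \<in> V \<and> open W \<and> y0 \<in> W \<and>
        (\<forall>x\<in>U. \<forall>p\<in>V. \<forall>q\<in>V. \<forall>y\<in>F (x, p) \<inter> W. \<exists>w\<in>F (x, q). norm (y - w) \<le> L * norm (p - q)))"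

definition lipp_hat ::
  "('x::real_normed_vector \<times> 'p::real_normed_vector \<Rightarrow> 'y::real_normed_vector set)
     \<Rightarrow> 'x \<Rightarrow> 'p \<Rightarrow> 'y \<Rightarrow> real" where
  "lipp_hat F x0 p0 y0 = Inf {L. lipp_const F x0 p0 y0 L}"

definition locally_sum_stable ::
  "('x::real_normed_vector \<times> 'p::real_normed_vector \<Rightarrow> 'y::real_normed_vector set)
     \<Rightarrow> ('x \<Rightarrow> 'y set) \<Rightarrow> 'x \<Rightarrow> 'p \<Rightarrow> 'y \<Rightarrow> 'y \<Rightarrow> bool" where
  "locally_sum_stable F G x0 p0 y0 z0 \<longleftrightarrow>
     (\<forall>\<epsilon>>0. \<exists>\<delta>>0. \<forall>x\<in>ball x0 \<delta>. \<forall>p\<in>ball p0 \<delta>.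
        \<forall>w\<in>{y + z |y z. y \<in> F (x, p) \<and> z \<in> G x} \<inter> ball (y0 + z0) \<delta>.
          \<exists>y\<in>F (x, p) \<inter> ball y0 \<epsilon>. \<exists>z\<in>G x \<inter> ball z0 \<epsilon>. w = y + z)"

end

theory Submission
  imports Defs
begin

text \<open>Fix \<open>p, q\<close> near \<open>pb\<close> and \<open>x \<in> S p\<close> near \<open>xb\<close>. Sum-stability writes \<open>0 = y0 + (- y0)\<close> with
  \<open>y0 \<in> F (x, p)\<close> near \<open>yb\<close>, and the Lipschitz property in \<open>p\<close> gives \<open>y1 \<in> F (x, q)\<close> with
  \<open>\<parallel>y1 - y0\<parallel> \<le> lp \<parallel>p - q\<parallel>\<close>. Alternating metric regularity of \<open>G\<close> (a point \<open>x'\<close> with \<open>- y1 \<in> G x'\<close>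
  and \<open>\<parallel>x' - x\<parallel> \<le> r \<parallel>y1 - y0\<parallel>\<close>) with the Lipschitz property of \<open>F (\<cdot>, q)\<close> in \<open>x\<close> produces a
  Graves-Lyusternik iteration whose increments contract by the factor \<open>lx r < 1\<close>. By closedness of
  the graphs its limit \<open>x*\<close> lies in \<open>S q\<close>, with \<open>\<parallel>x* - x\<parallel> \<le> r lp \<parallel>p - q\<parallel> / (1 - lx r)\<close>; letting the
  constants decrease to the moduli gives the bound.\<close>

lemma geometric_increments_imp_convergent:
  fixes X :: "nat \<Rightarrow> 'a::banach"
  assumes "\<And>n. norm (X (Suc n) - X n) \<le> C * \<theta> ^ n" and "0 \<le> \<theta>" "\<theta> < 1"
  shows "convergent X"
proof -
  have "summable (\<lambda>n. C * \<theta> ^ n)"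
    using assms(2,3) by (intro summable_mult summable_geometric) auto
  then have "summable (\<lambda>n. norm (X (Suc n) - X n))"
    by (rule summable_comparison_test[rotated]) (use assms(1) in auto)
  then have "summable (\<lambda>n. X (Suc n) - X n)"
    by (rule summable_norm_cancel)
  then obtain s where "(\<lambda>n. \<Sum>k<n. X (Suc k) - X k) \<longlonglongrightarrow> s"
    by (auto simp: summable_def sums_def)
  then have "(\<lambda>n. X 0 + (\<Sum>k<n. X (Suc k) - X k)) \<longlonglongrightarrow> X 0 + s"
    by (intro tendsto_intros)
  then have "X \<longlonglongrightarrow> X 0 + s"
    by (simp add: sum_lessThan_telescope)
  then show ?thesis
    by (auto simp: convergent_def)
qed

lemma geometric_partial_sum_le:
  fixes \<theta> :: real
  assumes "0 \<le> \<theta>" "\<theta> < 1"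
  shows "(\<Sum>k<n. \<theta> ^ k) \<le> 1 / (1 - \<theta>)"
  using assms by (simp add: sum_gp_strict divide_right_mono)

lemma open_contains_common_ball:
  assumes "open U" "a \<in> U" "open V" "b \<in> V" "open W" "c \<in> W"
  obtains e where "e > 0" "ball a e \<subseteq> U" "ball b e \<subseteq> V" "ball c e \<subseteq> W"
proof -
  obtain eU where "eU > 0" "ball a eU \<subseteq> U"
    using assms(1,2) open_contains_ball by blast
  moreover obtain eV where "eV > 0" "ball b eV \<subseteq> V"
    using assms(3,4) open_contains_ball by blast
  moreover obtain eW where "eW > 0" "ball c eW \<subseteq> W"
    using assms(5,6) open_contains_ball by blast
  ultimately show thesis
    by (intro that[of "min eU (min eV eW)"]) auto
qed

lemma cball_subset_ball_of_dist:
  assumes "dist a x + r < e"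
  shows "cball x r \<subseteq> ball a e"
proof
  fix z
  assume "z \<in> cball x r"
  then show "z \<in> ball a e"
    using assms dist_triangle[of a z x] by simp
qed

lemma infdist_less_imp_dist_less:
  assumes "A \<noteq> {}" "infdist x A < e"
  obtains a where "a \<in> A" "dist x a < e"
  using assms cInf_lessD[of "dist x ` A" e] by (auto simp: infdist_notempty)

lemma met_reg_const_on_balls:
  fixes G :: "'x::real_normed_vector \<Rightarrow> 'y::real_normed_vector set"
  assumes "met_reg_const G x0 z0 L" "L < L'"
  obtains e where "e > 0"
    "\<And>u v w. u \<in> ball x0 e \<Longrightarrow> w \<in> ball z0 e \<Longrightarrow> v \<in> G u \<Longrightarrow>
       \<exists>u'. w \<in> G u' \<and> norm (u' - u) \<le> L' * norm (w - v)"
proof -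
  obtain U V where L: "L > 0" and UV: "open U" "x0 \<in> U" "open V" "z0 \<in> V"
    and reg: "\<forall>u\<in>U. \<forall>w\<in>V. G u \<noteq> {} \<longrightarrow>
      inverse_mf G w \<noteq> {} \<and> infdist u (inverse_mf G w) \<le> L * infdist w (G u)"
    using assms(1) unfolding met_reg_const_def by blast
  obtain eU where "eU > 0" "ball x0 eU \<subseteq> U"
    using UV(1,2) open_contains_ball by blast
  moreover obtain eV where "eV > 0" "ball z0 eV \<subseteq> V"
    using UV(3,4) open_contains_ball by blast
  ultimately have e: "min eU eV > 0" "ball x0 (min eU eV) \<subseteq> U" "ball z0 (min eU eV) \<subseteq> V"
    using subset_ball[of "min eU eV" eU x0] subset_ball[of "min eU eV" eV z0] by auto
  have near_preimage: "\<exists>u'. w \<in> G u' \<and> norm (u' - u) \<le> L' * norm (w - v)"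
    if "u \<in> U" "w \<in> V" "v \<in> G u" for u v w
  proof (cases "w = v")
    case True
    then show ?thesis using that by auto
  next
    case False
    have "infdist u (inverse_mf G w) \<le> L * infdist w (G u)" "inverse_mf G w \<noteq> {}"
      using reg that by blast+
    moreover have "L * infdist w (G u) \<le> L * dist w v"
      using L that(3) by (simp add: infdist_le)
    \<comment> \<open>the slack \<open>L < L'\<close> makes up for the infimum in \<open>infdist\<close> not being attained\<close>
    moreover have "L * dist w v < L' * dist w v"
      using False assms(2) by simp
    ultimately obtain u' where "u' \<in> inverse_mf G w" "dist u u' < L' * dist w v"
      using infdist_less_imp_dist_less by (metis order.strict_trans1)
    then show ?thesis
      by (auto simp: inverse_mf_def dist_norm norm_minus_commute intro!: exI[of _ u'])
  qed
  show thesis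
    using that[OF e(1)] near_preimage e(2,3) by (meson subsetD)
qed

lemma lipx_const_on_balls:
  assumes "lipx_const F x0 p0 y0 L"
  obtains e where "e > 0"
    "\<And>x u p y. x \<in> ball x0 e \<Longrightarrow> u \<in> ball x0 e \<Longrightarrow> p \<in> ball p0 e \<Longrightarrow>
       y \<in> F (x, p) \<Longrightarrow> y \<in> ball y0 e \<Longrightarrow> \<exists>w\<in>F (u, p). norm (y - w) \<le> L * norm (x - u)"
proof -
  obtain U V W where UVW: "open U" "x0 \<in> U" "open V" "p0 \<in> V" "open W" "y0 \<in> W"
    and lip: "\<forall>x\<in>U. \<forall>u\<in>U. \<forall>p\<in>V. \<forall>y\<in>F (x, p) \<inter> W. \<exists>w\<in>F (u, p). norm (y - w) \<le> L * norm (x - u)"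
    using assms unfolding lipx_const_def by blast
  obtain e where "e > 0" "ball x0 e \<subseteq> U" "ball p0 e \<subseteq> V" "ball y0 e \<subseteq> W"
    using open_contains_common_ball[OF UVW] by blast
  with lip show thesis
    by (intro that) blast+
qed

lemma lipp_const_on_balls:
  assumes "lipp_const F x0 p0 y0 L"
  obtains e where "e > 0"
    "\<And>x p q y. x \<in> ball x0 e \<Longrightarrow> p \<in> ball p0 e \<Longrightarrow> q \<in> ball p0 e \<Longrightarrow>
       y \<in> F (x, p) \<Longrightarrow> y \<in> ball y0 e \<Longrightarrow> \<exists>w\<in>F (x, q). norm (y - w) \<le> L * norm (p - q)"
proof -
  obtain U V W where UVW: "open U" "x0 \<in> U" "open V" "p0 \<in> V" "open W" "y0 \<in> W"
    and lip: "\<forall>x\<in>U. \<forall>p\<in>V. \<forall>q\<in>V. \<forall>y\<in>F (x, p) \<inter> W. \<exists>w\<in>F (x, q). norm (y - w) \<le> L * norm (p - q)"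
    using assms unfolding lipp_const_def by blast
  obtain e where "e > 0" "ball x0 e \<subseteq> U" "ball p0 e \<subseteq> V" "ball y0 e \<subseteq> W"
    using open_contains_common_ball[OF UVW] by blast
  with lip show thesis
    by (intro that) blast+
qed

locale graves_iteration =
  fixes F G :: "'x::banach \<Rightarrow> 'y::banach set" and U :: "'x set" and W :: "'y set" and l r :: real
  assumes closed_graph_F: "closed (graph F)" and closed_graph_G: "closed (graph G)"
    and F_lipschitz: "\<And>u v y. u \<in> U \<Longrightarrow> v \<in> U \<Longrightarrow> y \<in> F u \<Longrightarrow> y \<in> W \<Longrightarrow>
      \<exists>w\<in>F v. norm (y - w) \<le> l * norm (u - v)"
    and G_regular: "\<And>u y z. u \<in> U \<Longrightarrow> y \<in> W \<Longrightarrow> - z \<in> G u \<Longrightarrow>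
      \<exists>v. - y \<in> G v \<and> norm (v - u) \<le> r * norm (y - z)"
    and l_nonneg: "0 \<le> l" and r_nonneg: "0 \<le> r" and contraction: "l * r < 1"
begin

lemma iteration_step:
  assumes "cball u (r * norm (y' - y)) \<subseteq> U" "y' \<in> W" "- y \<in> G u" "y' \<in> F u"
  obtains v y'' where "- y' \<in> G v" "y'' \<in> F v" "norm (v - u) \<le> r * norm (y' - y)"
    "norm (y'' - y') \<le> l * r * norm (y' - y)"
proof -
  have u: "u \<in> U"
    using assms(1) r_nonneg by auto
  then obtain v where v: "- y' \<in> G v" "norm (v - u) \<le> r * norm (y' - y)"
    using G_regular assms(2,3) by blast
  then have "v \<in> U"
    using assms(1) by (auto simp: dist_norm norm_minus_commute)
  then obtain y'' where y'': "y'' \<in> F v" "norm (y' - y'') \<le> l * norm (u - v)"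
    using F_lipschitz u assms(2,4) by blast
  have "l * norm (u - v) \<le> l * (r * norm (y' - y))"
    using v(2) l_nonneg by (simp add: norm_minus_commute mult_left_mono)
  with y'' show thesis
    using that v by (simp add: norm_minus_commute mult.assoc)
qed

lemma iteration_invariant_step:
  assumes "cball x (r * d / (1 - l * r)) \<subseteq> U" "cball y0 (d / (1 - l * r)) \<subseteq> W" "0 \<le> d"
    and "- y \<in> G u" "y' \<in> F u" "norm (y' - y) \<le> d * (l * r) ^ n"
    and "norm (u - x) \<le> r * d * (\<Sum>k<n. (l * r) ^ k)" "norm (y - y0) \<le> d * (\<Sum>k<n. (l * r) ^ k)"
  obtains v y'' where "- y' \<in> G v" "y'' \<in> F v" "norm (y'' - y') \<le> d * (l * r) ^ Suc n"
    "norm (v - u) \<le> r * d * (l * r) ^ n" "norm (v - x) \<le> r * d * (\<Sum>k<Suc n. (l * r) ^ k)"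
    "norm (y' - y0) \<le> d * (\<Sum>k<Suc n. (l * r) ^ k)"
proof -
  define s where "s = (\<Sum>k<Suc n. (l * r) ^ k)"
  have "s \<le> 1 / (1 - l * r)"
    unfolding s_def using l_nonneg r_nonneg contraction by (intro geometric_partial_sum_le) auto
  then have bounds: "r * d * s \<le> r * d / (1 - l * r)" "d * s \<le> d / (1 - l * r)"
    using mult_left_mono[of s "1 / (1 - l * r)"] r_nonneg \<open>0 \<le> d\<close> by simp_all
  have y'_y0: "norm (y' - y0) \<le> d * s"
    using norm_diff_triangle_le[OF assms(6,8)] by (simp add: s_def algebra_simps)
  have r_step: "r * norm (y' - y) \<le> r * d * (l * r) ^ n"
    using mult_left_mono[OF assms(6) r_nonneg] by simp
  have near_x: "norm (z - x) \<le> r * d * s" if "norm (z - u) \<le> r * d * (l * r) ^ n" for z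
    using norm_diff_triangle_le[OF that assms(7)] by (simp add: s_def algebra_simps)
  have "cball u (r * norm (y' - y)) \<subseteq> cball x (r * d / (1 - l * r))"
  proof
    fix z
    assume "z \<in> cball u (r * norm (y' - y))"
    then have "norm (z - u) \<le> r * d * (l * r) ^ n"
      using r_step by (simp add: dist_norm norm_minus_commute)
    then have "norm (z - x) \<le> r * d / (1 - l * r)"
      using near_x bounds(1) by fastforce
    then show "z \<in> cball x (r * d / (1 - l * r))"
      by (simp add: dist_norm norm_minus_commute)
  qed
  then have "cball u (r * norm (y' - y)) \<subseteq> U"
    using assms(1) by blast
  moreover have "y' \<in> W"
    using assms(2) y'_y0 bounds(2) by (auto simp: dist_norm norm_minus_commute)
  ultimately obtain v y'' where v: "- y' \<in> G v" "y'' \<in> F v" "norm (v - u) \<le> r * norm (y' - y)"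
    "norm (y'' - y') \<le> l * r * norm (y' - y)"
    using iteration_step assms(4,5) by blast
  have "norm (y'' - y') \<le> d * (l * r) ^ Suc n"
    using v(4) mult_left_mono[OF assms(6), of "l * r"] l_nonneg r_nonneg by (simp add: algebra_simps)
  then show thesis
    using that v(1-3) r_step near_x y'_y0 s_def by force
qed

lemma iteration_sequence:
  assumes "- y0 \<in> G x" "y1 \<in> F x" "norm (y1 - y0) \<le> d"
    and "cball x (r * d / (1 - l * r)) \<subseteq> U" "cball y0 (d / (1 - l * r)) \<subseteq> W"
  obtains xs ys where "\<And>n. norm (xs (Suc n) - xs n) \<le> r * d * (l * r) ^ n"
    "\<And>n. norm (ys (Suc n) - ys n) \<le> d * (l * r) ^ n"
    "\<And>n. - ys n \<in> G (xs n)" "\<And>n. ys (Suc n) \<in> F (xs n)"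
    "\<And>n. norm (xs n - x) \<le> r * d / (1 - l * r)"
proof -
  have "0 \<le> d"
    using assms(3) norm_ge_zero order_trans by blast
  define s where "s n = (\<Sum>k<n. (l * r) ^ k)" for n
  \<comment> \<open>a state \<open>(u, y, y')\<close> stands for \<open>(x\<^sub>n, y\<^sub>n, y\<^sub>n\<^sub>+\<^sub>1)\<close>\<close>
  define P :: "nat \<Rightarrow> 'x \<times> 'y \<times> 'y \<Rightarrow> bool"
    where "P n = (\<lambda>(u, y, y'). - y \<in> G u \<and> y' \<in> F u \<and> norm (y' - y) \<le> d * (l * r) ^ n \<and>
      norm (u - x) \<le> r * d * s n \<and> norm (y - y0) \<le> d * s n)" for n
  define Q :: "nat \<Rightarrow> 'x \<times> 'y \<times> 'y \<Rightarrow> 'x \<times> 'y \<times> 'y \<Rightarrow> bool"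
    where "Q n = (\<lambda>(u, y, y') (v, z, z'). norm (v - u) \<le> r * d * (l * r) ^ n \<and> z = y')" for n
  have "\<exists>t'. P (Suc n) t' \<and> Q n t t'" if "P n t" for n t
  proof -
    obtain u y y' where t: "t = (u, y, y')"
      using prod_cases3 by blast
    have inv: "- y \<in> G u" "y' \<in> F u" "norm (y' - y) \<le> d * (l * r) ^ n"
      "norm (u - x) \<le> r * d * (\<Sum>k<n. (l * r) ^ k)" "norm (y - y0) \<le> d * (\<Sum>k<n. (l * r) ^ k)"
      using that by (simp_all add: P_def s_def t)
    obtain v y'' where "- y' \<in> G v" "y'' \<in> F v" "norm (y'' - y') \<le> d * (l * r) ^ Suc n"
      "norm (v - u) \<le> r * d * (l * r) ^ n" "norm (v - x) \<le> r * d * (\<Sum>k<Suc n. (l * r) ^ k)"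
      "norm (y' - y0) \<le> d * (\<Sum>k<Suc n. (l * r) ^ k)"
      by (metis iteration_invariant_step[OF assms(4,5) \<open>0 \<le> d\<close> inv])
    then have "P (Suc n) (v, y', y'') \<and> Q n t (v, y', y'')"
      by (simp add: P_def Q_def s_def t)
    then show ?thesis
      by blast
  qed
  moreover have "P 0 (x, y0, y1)"
    using assms(1-3) by (simp add: P_def s_def)
  ultimately obtain f where f: "\<And>n. P n (f n)" "\<And>n. Q n (f n) (f (Suc n))"
    using dependent_nat_choice[of P Q] by blast
  show thesis
  proof (rule that[where xs = "\<lambda>n. fst (f n)" and ys = "\<lambda>n. fst (snd (f n))"])
    fix n
    obtain u y y' where fn: "f n = (u, y, y')"
      using prod_cases3 by blast
    have next_y: "fst (snd (f (Suc n))) = y'"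
      using f(2)[of n] by (auto simp: Q_def fn split: prod.splits)
    show "- fst (snd (f n)) \<in> G (fst (f n))" "fst (snd (f (Suc n))) \<in> F (fst (f n))"
      "norm (fst (snd (f (Suc n))) - fst (snd (f n))) \<le> d * (l * r) ^ n"
      using f(1)[of n] next_y by (simp_all add: P_def fn)
    show "norm (fst (f (Suc n)) - fst (f n)) \<le> r * d * (l * r) ^ n"
      using f(2)[of n] by (auto simp: Q_def fn split: prod.splits)
    have "s n \<le> 1 / (1 - l * r)"
      unfolding s_def using l_nonneg r_nonneg contraction by (intro geometric_partial_sum_le) auto
    then have "r * d * s n \<le> r * d / (1 - l * r)"
      using mult_left_mono[of "s n" "1 / (1 - l * r)" "r * d"] r_nonneg \<open>0 \<le> d\<close> by simp
    then show "norm (fst (f n) - x) \<le> r * d / (1 - l * r)"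
      using f(1)[of n] by (simp add: P_def fn)
  qed
qed

lemma solution_near:
  assumes "- y0 \<in> G x" "y1 \<in> F x" "norm (y1 - y0) \<le> d"
    and "cball x (r * d / (1 - l * r)) \<subseteq> U" "cball y0 (d / (1 - l * r)) \<subseteq> W"
  obtains x' y where "y \<in> F x'" "- y \<in> G x'" "norm (x' - x) \<le> r * d / (1 - l * r)"
proof -
  obtain xs ys where seq: "\<And>n. norm (xs (Suc n) - xs n) \<le> r * d * (l * r) ^ n"
    "\<And>n. norm (ys (Suc n) - ys n) \<le> d * (l * r) ^ n"
    "\<And>n. - ys n \<in> G (xs n)" "\<And>n. ys (Suc n) \<in> F (xs n)"
    "\<And>n. norm (xs n - x) \<le> r * d / (1 - l * r)"
    by (metis iteration_sequence[OF assms])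
  have \<theta>: "0 \<le> l * r" "l * r < 1"
    using l_nonneg r_nonneg contraction by simp_all
  obtain x' where x': "xs \<longlonglongrightarrow> x'"
    using geometric_increments_imp_convergent[OF seq(1) \<theta>] by (auto simp: convergent_def)
  obtain y where y: "ys \<longlonglongrightarrow> y"
    using geometric_increments_imp_convergent[OF seq(2) \<theta>] by (auto simp: convergent_def)
  have "(\<lambda>n. (xs n, ys (Suc n))) \<longlonglongrightarrow> (x', y)"
    using x' LIMSEQ_Suc[OF y] by (rule tendsto_Pair)
  then have "(x', y) \<in> graph F"
    by (rule closed_sequentially[OF closed_graph_F, rotated]) (use seq(4) in \<open>simp add: graph_def\<close>)
  moreover have "(\<lambda>n. (xs n, - ys n)) \<longlonglongrightarrow> (x', - y)"
    using x' y by (intro tendsto_intros)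
  then have "(x', - y) \<in> graph G"
    by (rule closed_sequentially[OF closed_graph_G, rotated]) (use seq(3) in \<open>simp add: graph_def\<close>)
  moreover have "(\<lambda>n. norm (xs n - x)) \<longlonglongrightarrow> norm (x' - x)"
    using x' by (intro tendsto_intros)
  then have "norm (x' - x) \<le> r * d / (1 - l * r)"
    using seq(5) by (intro LIMSEQ_le_const2) auto
  ultimately show thesis
    using that by (simp add: graph_def)
qed

lemma solution_in_ball:
  assumes "- y0 \<in> G x" "y1 \<in> F x" "norm (y1 - y0) \<le> d"
    and "ball a e \<subseteq> U" "ball b e \<subseteq> W"
    and "dist a x + r * d / (1 - l * r) < e" "dist b y0 + d / (1 - l * r) < e"
  obtains x' y where "y \<in> F x'" "- y \<in> G x'" "norm (x' - x) \<le> r * d / (1 - l * r)"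
proof -
  have "cball x (r * d / (1 - l * r)) \<subseteq> U" "cball y0 (d / (1 - l * r)) \<subseteq> W"
    using cball_subset_ball_of_dist[OF assms(6)] cball_subset_ball_of_dist[OF assms(7)] assms(4,5)
    by blast+
  then show thesis
    using solution_near[OF assms(1-3)] that by blast
qed

end

lemma graves_iteration_near:
  fixes F :: "'x::banach \<times> 'p::banach \<Rightarrow> 'y::banach set" and G :: "'x \<Rightarrow> 'y set"
  assumes closed_F: "\<exists>V. open V \<and> pb \<in> V \<and> (\<forall>p\<in>V. closed (graph (\<lambda>x. F (x, p))))"
    and closed_G: "closed (graph G)"
    and lx: "lipx_const F xb pb yb lx" and lp: "lipp_const F xb pb yb lp"
    and reg: "met_reg_const G xb (- yb) r" and "r < r'" and "lx * r' < 1"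
  obtains e where "e > 0"
    "\<And>q. q \<in> ball pb e \<Longrightarrow> graves_iteration (\<lambda>x. F (x, q)) G (ball xb e) (ball yb e) lx r'"
    "\<And>x p q y. x \<in> ball xb e \<Longrightarrow> p \<in> ball pb e \<Longrightarrow> q \<in> ball pb e \<Longrightarrow>
       y \<in> F (x, p) \<Longrightarrow> y \<in> ball yb e \<Longrightarrow> \<exists>w\<in>F (x, q). norm (y - w) \<le> lp * norm (p - q)"
proof -
  obtain ex where "ex > 0" and lip_x: "\<And>x u p y. x \<in> ball xb ex \<Longrightarrow> u \<in> ball xb ex \<Longrightarrow>
      p \<in> ball pb ex \<Longrightarrow> y \<in> F (x, p) \<Longrightarrow> y \<in> ball yb ex \<Longrightarrow>
      \<exists>w\<in>F (u, p). norm (y - w) \<le> lx * norm (x - u)"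
    using lipx_const_on_balls[OF lx] by blast
  obtain ep where "ep > 0" and lip_p: "\<And>x p q y. x \<in> ball xb ep \<Longrightarrow> p \<in> ball pb ep \<Longrightarrow>
      q \<in> ball pb ep \<Longrightarrow> y \<in> F (x, p) \<Longrightarrow> y \<in> ball yb ep \<Longrightarrow>
      \<exists>w\<in>F (x, q). norm (y - w) \<le> lp * norm (p - q)"
    using lipp_const_on_balls[OF lp] by blast
  obtain eg where "eg > 0" and regular: "\<And>u v w. u \<in> ball xb eg \<Longrightarrow> w \<in> ball (- yb) eg \<Longrightarrow>
      v \<in> G u \<Longrightarrow> \<exists>u'. w \<in> G u' \<and> norm (u' - u) \<le> r' * norm (w - v)"
    using met_reg_const_on_balls[OF reg \<open>r < r'\<close>] by blast
  obtain V where "open V" "pb \<in> V" and closed_V: "\<forall>q\<in>V. closed (graph (\<lambda>x. F (x, q)))"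
    using closed_F by blast
  then obtain ec where "ec > 0" "ball pb ec \<subseteq> V"
    using open_contains_ball by blast
  with closed_V have closed_Fq: "\<And>q. q \<in> ball pb ec \<Longrightarrow> closed (graph (\<lambda>x. F (x, q)))"
    by blast
  define e where "e = min (min ex ep) (min eg ec)"
  have e_le: "e \<le> ex" "e \<le> ep" "e \<le> eg" "e \<le> ec"
    by (simp_all add: e_def)
  have "graves_iteration (\<lambda>x. F (x, q)) G (ball xb e) (ball yb e) lx r'"
    if "q \<in> ball pb e" for q
  proof
    show "closed (graph (\<lambda>x. F (x, q)))"
      using that e_le by (intro closed_Fq) auto
    show "\<exists>w\<in>F (v, q). norm (y - w) \<le> lx * norm (u - v)"
      if "u \<in> ball xb e" "v \<in> ball xb e" "y \<in> F (u, q)" "y \<in> ball yb e" for u v y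
      using that \<open>q \<in> ball pb e\<close> e_le by (intro lip_x) auto
    show "\<exists>v. - y \<in> G v \<and> norm (v - u) \<le> r' * norm (y - z)"
      if "u \<in> ball xb e" "y \<in> ball yb e" "- z \<in> G u" for u y z
    proof -
      have "\<exists>v. - y \<in> G v \<and> norm (v - u) \<le> r' * norm (- y - - z)"
        using that e_le by (intro regular) (auto simp: dist_norm norm_minus_commute)
      then show ?thesis
        by (simp add: norm_minus_commute)
    qed
  qed (use closed_G lx reg \<open>r < r'\<close> \<open>lx * r' < 1\<close> in \<open>auto simp: lipx_const_def met_reg_const_def\<close>)
  moreover have "e > 0"
    using \<open>ex > 0\<close> \<open>ep > 0\<close> \<open>eg > 0\<close> \<open>ec > 0\<close> by (simp add: e_def)
  moreover have "\<exists>w\<in>F (x, q). norm (y - w) \<le> lp * norm (p - q)"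
    if "x \<in> ball xb e" "p \<in> ball pb e" "q \<in> ball pb e" "y \<in> F (x, p)" "y \<in> ball yb e" for x p q y
    using that e_le by (intro lip_p) auto
  ultimately show thesis
    using that by blast
qed

lemma lip_like_const_solution_map:
  fixes F :: "'x::banach \<times> 'p::banach \<Rightarrow> 'y::banach set"
    and G :: "'x \<Rightarrow> 'y set" and S :: "'p \<Rightarrow> 'x set"
  assumes S_def: "\<And>p. S p = {x. 0 \<in> {y + z |y z. y \<in> F (x, p) \<and> z \<in> G x}}"
    and sum_stable: "locally_sum_stable F G xb pb yb (- yb)"
    and closed_F: "\<exists>V. open V \<and> pb \<in> V \<and> (\<forall>p\<in>V. closed (graph (\<lambda>x. F (x, p))))"
    and closed_G: "closed (graph G)"
    and lx: "lipx_const F xb pb yb lx" and lp: "lipp_const F xb pb yb lp"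
    and reg: "met_reg_const G xb (- yb) r" and "r < r'" and contraction: "lx * r' < 1"
  shows "lip_like_const S pb xb (r' * lp / (1 - lx * r'))"
proof -
  obtain e where "e > 0"
    and iteration: "\<And>q. q \<in> ball pb e \<Longrightarrow>
      graves_iteration (\<lambda>x. F (x, q)) G (ball xb e) (ball yb e) lx r'"
    and lip_p: "\<And>x p q y. x \<in> ball xb e \<Longrightarrow> p \<in> ball pb e \<Longrightarrow> q \<in> ball pb e \<Longrightarrow>
      y \<in> F (x, p) \<Longrightarrow> y \<in> ball yb e \<Longrightarrow> \<exists>w\<in>F (x, q). norm (y - w) \<le> lp * norm (p - q)"
    using graves_iteration_near[OF closed_F closed_G lx lp reg \<open>r < r'\<close> contraction] by blast
  obtain \<delta> where "\<delta> > 0" and split: "\<forall>x\<in>ball xb \<delta>. \<forall>p\<in>ball pb \<delta>.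
      \<forall>w\<in>{y + z |y z. y \<in> F (x, p) \<and> z \<in> G x} \<inter> ball (yb + - yb) \<delta>.
      \<exists>y\<in>F (x, p) \<inter> ball yb (e / 2). \<exists>z\<in>G x \<inter> ball (- yb) (e / 2). w = y + z"
    using sum_stable[unfolded locally_sum_stable_def, rule_format, of "e / 2"] \<open>e > 0\<close> by auto
  have pos: "lp > 0" "r' > 0"
    using lp reg \<open>r < r'\<close> by (auto simp: lipp_const_def met_reg_const_def)
  define m where "m = lp / (1 - lx * r')"
  define \<kappa> where "\<kappa> = r' * m"
  have "m \<ge> 0" "\<kappa> \<ge> 0"
    using pos contraction by (simp_all add: m_def \<kappa>_def)
  \<comment> \<open>small enough that the iteration started at any \<open>x \<in> S p \<inter> ball xb \<rho>\<close> stays in the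
    balls of radius \<open>e\<close>\<close>
  define \<rho> where "\<rho> = min \<delta> (e / (2 * (1 + 2 * \<kappa> + 2 * m)))"
  have "\<rho> > 0"
    using \<open>\<delta> > 0\<close> \<open>e > 0\<close> \<open>m \<ge> 0\<close> \<open>\<kappa> \<ge> 0\<close> by (simp add: \<rho>_def)
  have "\<rho> \<le> e / (2 * (1 + 2 * \<kappa> + 2 * m))"
    by (simp add: \<rho>_def)
  then have "\<rho> * (1 + 2 * \<kappa> + 2 * m) \<le> e / 2"
    using \<open>m \<ge> 0\<close> \<open>\<kappa> \<ge> 0\<close> by (simp add: field_simps)
  then have "\<rho> + 2 * (\<kappa> * \<rho>) + 2 * (m * \<rho>) \<le> e / 2"
    by (simp add: algebra_simps)
  moreover have "\<kappa> * \<rho> \<ge> 0" "m * \<rho> \<ge> 0"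
    using \<open>\<rho> > 0\<close> \<open>m \<ge> 0\<close> \<open>\<kappa> \<ge> 0\<close> by simp_all
  ultimately have radii: "\<rho> + 2 * \<kappa> * \<rho> < e" "e / 2 + 2 * m * \<rho> \<le> e" "\<rho> < e"
    using \<open>e > 0\<close> \<open>\<rho> > 0\<close> by (simp_all add: mult.assoc)
  have "\<rho> \<le> \<delta>"
    by (simp add: \<rho>_def)
  have "\<exists>x'\<in>S q. norm (x - x') \<le> \<kappa> * norm (p - q)"
    if pqx: "p \<in> ball pb \<rho>" "q \<in> ball pb \<rho>" "x \<in> S p" "x \<in> ball xb \<rho>" for p q x
  proof -
    have pq: "norm (p - q) < 2 * \<rho>"
      using pqx(1,2) norm_diff_triangle_less[of p pb "\<rho>" q "\<rho>"]
      by (simp add: dist_norm norm_minus_commute)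
    have "0 \<in> {y + z |y z. y \<in> F (x, p) \<and> z \<in> G x} \<inter> ball (yb + - yb) \<delta>"
      using pqx(3) S_def \<open>\<delta> > 0\<close> by auto
    then obtain y0 z0 where y0: "y0 \<in> F (x, p)" "dist yb y0 < e / 2"
      and z0: "z0 \<in> G x" "0 = y0 + z0"
      using split pqx(1,4) \<open>\<rho> \<le> \<delta>\<close> by fastforce
    have "- y0 \<in> G x"
      using z0 by (metis add_eq_0_iff)
    have "y0 \<in> ball yb e"
      using y0(2) zero_le_dist[of yb y0] unfolding mem_ball by linarith
    moreover have "x \<in> ball xb e" "p \<in> ball pb e" "q \<in> ball pb e"
      using pqx(1,2,4) radii(3) by auto
    ultimately obtain y1 where y1: "y1 \<in> F (x, q)" "norm (y1 - y0) \<le> lp * norm (p - q)"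
      using lip_p y0(1) by (metis norm_minus_commute)
    have "\<kappa> * norm (p - q) \<le> 2 * \<kappa> * \<rho>" "m * norm (p - q) \<le> 2 * m * \<rho>"
      using mult_left_mono[OF less_imp_le[OF pq] \<open>\<kappa> \<ge> 0\<close>]
        mult_left_mono[OF less_imp_le[OF pq] \<open>m \<ge> 0\<close>] by (simp_all add: ac_simps)
    then have "dist xb x + r' * (lp * norm (p - q)) / (1 - lx * r') < e"
      "dist yb y0 + lp * norm (p - q) / (1 - lx * r') < e"
      using pqx(4) y0(2) radii(1,2) by (simp_all add: \<kappa>_def m_def)
    then obtain x' y where "y \<in> F (x', q)" "- y \<in> G x'"
      "norm (x' - x) \<le> r' * (lp * norm (p - q)) / (1 - lx * r')"
      using graves_iteration.solution_in_ball[OF iteration[OF \<open>q \<in> ball pb e\<close>]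
          \<open>- y0 \<in> G x\<close> y1 order_refl order_refl]
      by blast
    then show ?thesis
      using S_def by (force simp: norm_minus_commute \<kappa>_def m_def)
  qed
  then show ?thesis
    unfolding lip_like_const_def using pos contraction \<open>\<rho> > 0\<close>
    by (intro conjI exI[of _ "ball pb \<rho>"] exI[of _ "ball xb \<rho>"]) (auto simp: \<kappa>_def m_def)
qed

lemma lip_like_const2_imp_lipx_const:
  assumes "lip_like_const2 F (x0, p0) y0 L"
  shows "lipx_const F x0 p0 y0 L"
proof -
  obtain U V where "L > 0" "open U" "(x0, p0) \<in> U" "open V" "y0 \<in> V"
    and lip: "\<forall>a\<in>U. \<forall>u\<in>U. \<forall>y\<in>F a \<inter> V. \<exists>w\<in>F u.
      norm (y - w) \<le> L * (norm (fst a - fst u) + norm (snd a - snd u))"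
    using assms unfolding lip_like_const2_def by (elim conjE exE) blast
  moreover obtain A B where "open A" "open B" "(x0, p0) \<in> A \<times> B" "A \<times> B \<subseteq> U"
    using open_prod_elim[OF \<open>open U\<close> \<open>(x0, p0) \<in> U\<close>] by blast
  moreover have "\<exists>w\<in>F (u, p). norm (y - w) \<le> L * norm (x - u)"
    if "x \<in> A" "u \<in> A" "p \<in> B" "y \<in> F (x, p) \<inter> V" for x u p y
  proof -
    have "(x, p) \<in> U" "(u, p) \<in> U"
      using that \<open>A \<times> B \<subseteq> U\<close> by auto
    then show ?thesis
      using lip that(4) by fastforce
  qed
  ultimately show ?thesis
    unfolding lipx_const_def by (intro conjI exI[of _ A] exI[of _ B] exI[of _ V]) auto
qed

lemma lip_like_const2_imp_lipp_const:
  assumes "lip_like_const2 F (x0, p0) y0 L"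
  shows "lipp_const F x0 p0 y0 L"
proof -
  obtain U V where "L > 0" "open U" "(x0, p0) \<in> U" "open V" "y0 \<in> V"
    and lip: "\<forall>a\<in>U. \<forall>u\<in>U. \<forall>y\<in>F a \<inter> V. \<exists>w\<in>F u.
      norm (y - w) \<le> L * (norm (fst a - fst u) + norm (snd a - snd u))"
    using assms unfolding lip_like_const2_def by (elim conjE exE) blast
  moreover obtain A B where "open A" "open B" "(x0, p0) \<in> A \<times> B" "A \<times> B \<subseteq> U"
    using open_prod_elim[OF \<open>open U\<close> \<open>(x0, p0) \<in> U\<close>] by blast
  moreover have "\<exists>w\<in>F (x, q). norm (y - w) \<le> L * norm (p - q)"
    if "x \<in> A" "p \<in> B" "q \<in> B" "y \<in> F (x, p) \<inter> V" for x p q y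
  proof -
    have "(x, p) \<in> U" "(x, q) \<in> U"
      using that \<open>A \<times> B \<subseteq> U\<close> by auto
    then show ?thesis
      using lip that(4) by fastforce
  qed
  ultimately show ?thesis
    unfolding lipp_const_def by (intro conjI exI[of _ A] exI[of _ B] exI[of _ V]) auto
qed

lemma Inf_quotient_bound:
  fixes A B C D :: "real set"
  assumes ne: "A \<noteq> {}" "B \<noteq> {}" "C \<noteq> {}"
    and pos: "\<And>a. a \<in> A \<Longrightarrow> 0 < a" "\<And>b. b \<in> B \<Longrightarrow> 0 < b" "\<And>c. c \<in> C \<Longrightarrow> 0 < c"
      "\<And>d. d \<in> D \<Longrightarrow> 0 < d"
    and small: "Inf A * Inf C < 1"
    and D: "\<And>a b c c'. a \<in> A \<Longrightarrow> b \<in> B \<Longrightarrow> c \<in> C \<Longrightarrow> c < c' \<Longrightarrow> a * c' < 1 \<Longrightarrow>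
      c' * b / (1 - a * c') \<in> D"
  shows "D \<noteq> {}" "Inf D \<le> Inf C * Inf B / (1 - Inf A * Inf C)"
proof -
  define \<alpha> \<beta> \<gamma> where "\<alpha> = Inf A" "\<beta> = Inf B" "\<gamma> = Inf C"
  have "0 \<le> \<beta>" "0 \<le> \<gamma>"
    unfolding \<alpha>_\<beta>_\<gamma>_def using ne(2,3) pos(2,3) by (meson cInf_greatest less_imp_le)+
  \<comment> \<open>the regularity constant is taken as \<open>\<gamma> + 2 t\<close> so that it strictly exceeds some \<open>c \<in> C\<close>
    with \<open>c < \<gamma> + t\<close>\<close>
  define bound where "bound t = (\<gamma> + 2 * t) * (\<beta> + t) / (1 - (\<alpha> + t) * (\<gamma> + 2 * t))" for t
  have near: "\<exists>d\<in>D. d \<le> bound 0 + \<eta>" if "\<eta> > 0" for \<eta>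
  proof -
    have "(bound \<longlongrightarrow> bound 0) (at_right 0)"
      using small unfolding bound_def \<alpha>_\<beta>_\<gamma>_def by (intro tendsto_intros) auto
    then have "eventually (\<lambda>t. bound t < bound 0 + \<eta>) (at_right 0)"
      using that by (intro order_tendstoD) auto
    moreover have "((\<lambda>t. (\<alpha> + t) * (\<gamma> + 2 * t)) \<longlongrightarrow> (\<alpha> + 0) * (\<gamma> + 2 * 0)) (at_right 0)"
      by (intro tendsto_intros)
    then have "eventually (\<lambda>t. (\<alpha> + t) * (\<gamma> + 2 * t) < 1) (at_right 0)"
      using small by (intro order_tendstoD) (auto simp: \<alpha>_\<beta>_\<gamma>_def)
    moreover have "eventually (\<lambda>t. t > 0) (at_right (0::real))"
      by (simp add: eventually_at_right_less)
    ultimately have "eventually (\<lambda>t. bound t < bound 0 + \<eta> \<and> (\<alpha> + t) * (\<gamma> + 2 * t) < 1 \<and> t > 0)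
      (at_right 0)"
      by (intro eventually_conj)
    then obtain t where t: "bound t < bound 0 + \<eta>" "(\<alpha> + t) * (\<gamma> + 2 * t) < 1" "t > 0"
      using eventually_happens'[OF trivial_limit_at_right_real] by blast
    obtain a b c where abc: "a \<in> A" "a < \<alpha> + t" "b \<in> B" "b < \<beta> + t" "c \<in> C" "c < \<gamma> + t"
      using cInf_lessD[OF ne(1), of "\<alpha> + t"] cInf_lessD[OF ne(2), of "\<beta> + t"]
        cInf_lessD[OF ne(3), of "\<gamma> + t"] t(3) by (auto simp: \<alpha>_\<beta>_\<gamma>_def)
    have "a * (\<gamma> + 2 * t) \<le> (\<alpha> + t) * (\<gamma> + 2 * t)"
      using abc(2) \<open>0 \<le> \<gamma>\<close> t(3) by (intro mult_right_mono) auto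
    moreover have "(\<gamma> + 2 * t) * b \<le> (\<gamma> + 2 * t) * (\<beta> + t)"
      using abc(4) \<open>0 \<le> \<gamma>\<close> t(3) by (intro mult_left_mono) auto
    ultimately have "(\<gamma> + 2 * t) * b / (1 - a * (\<gamma> + 2 * t)) \<le> bound t"
      unfolding bound_def using t(2,3) \<open>0 \<le> \<beta>\<close> \<open>0 \<le> \<gamma>\<close> by (intro frac_le) auto
    moreover have "(\<gamma> + 2 * t) * b / (1 - a * (\<gamma> + 2 * t)) \<in> D"
      using D abc t(2,3) \<open>a * (\<gamma> + 2 * t) \<le> (\<alpha> + t) * (\<gamma> + 2 * t)\<close> by simp
    ultimately show ?thesis
      using t(1) by (meson less_imp_le order_trans)
  qed
  then show "D \<noteq> {}"
    using zero_less_one by blast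
  have "bdd_below D"
    using pos(4) by (meson bdd_belowI less_imp_le)
  have "Inf D \<le> bound 0"
  proof (rule field_le_epsilon)
    fix \<eta> :: real
    assume "0 < \<eta>"
    then obtain d where "d \<in> D" "d \<le> bound 0 + \<eta>"
      using near by blast
    then show "Inf D \<le> bound 0 + \<eta>"
      using cInf_lower[OF \<open>d \<in> D\<close> \<open>bdd_below D\<close>] by linarith
  qed
  then show "Inf D \<le> Inf C * Inf B / (1 - Inf A * Inf C)"
    by (simp add: bound_def \<alpha>_\<beta>_\<gamma>_def)
qed

theorem theorem4p13:
  fixes F :: "'x::banach \<times> 'p::banach \<Rightarrow> 'y::banach set"
    and G :: "'x \<Rightarrow> 'y set"
    and S :: "'p \<Rightarrow> 'x set"
    and xb :: 'x and pb :: 'p and yb :: 'y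
  assumes yF: "yb \<in> F (xb, pb)"
    and yG: "- yb \<in> G xb"
    and S_def: "\<And>p. S p = {x. 0 \<in> {y + z |y z. y \<in> F (x, p) \<and> z \<in> G x}}"
    and i: "locally_sum_stable F G xb pb yb (- yb)"
    and ii: "\<exists>V. open V \<and> pb \<in> V \<and> (\<forall>p\<in>V. closed (graph (\<lambda>x. F (x, p))))"
    and iii: "closed (graph G)"
    and iv: "lipschitz_like2 F (xb, pb) yb"
    and v: "metrically_regular G xb (- yb)"
    and vi: "inner_semicontinuous G xb (- yb)"
    and vii: "lipx_hat F xb pb yb * reg_mod G xb (- yb) < 1"
  shows "lipschitz_like S pb xb \<and>
         lip_mod S pb xb \<le> reg_mod G xb (- yb) * lipp_hat F xb pb yb
                             / (1 - lipx_hat F xb pb yb * reg_mod G xb (- yb))"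
proof -
  let ?LX = "{L. lipx_const F xb pb yb L}" and ?LP = "{L. lipp_const F xb pb yb L}"
    and ?RG = "{L. met_reg_const G xb (- yb) L}" and ?LS = "{L. lip_like_const S pb xb L}"
  obtain L where "lip_like_const2 F (xb, pb) yb L"
    using iv unfolding lipschitz_like2_def by blast
  then have ne: "?LX \<noteq> {}" "?LP \<noteq> {}"
    using lip_like_const2_imp_lipx_const lip_like_const2_imp_lipp_const by blast+
  have "?RG \<noteq> {}"
    using v unfolding metrically_regular_def by blast
  have pos: "\<And>L. L \<in> ?LX \<Longrightarrow> 0 < L" "\<And>L. L \<in> ?LP \<Longrightarrow> 0 < L"
    "\<And>L. L \<in> ?RG \<Longrightarrow> 0 < L" "\<And>L. L \<in> ?LS \<Longrightarrow> 0 < L"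
    by (simp_all add: lipx_const_def lipp_const_def met_reg_const_def lip_like_const_def)
  have "Inf ?LX * Inf ?RG < 1"
    using vii unfolding lipx_hat_def reg_mod_def .
  moreover have "c' * b / (1 - a * c') \<in> ?LS"
    if "a \<in> ?LX" "b \<in> ?LP" "c \<in> ?RG" "c < c'" "a * c' < 1" for a b c c'
    using lip_like_const_solution_map[OF S_def i ii iii] that by blast
  ultimately have "?LS \<noteq> {}" "Inf ?LS \<le> Inf ?RG * Inf ?LP / (1 - Inf ?LX * Inf ?RG)"
    using Inf_quotient_bound[OF ne \<open>?RG \<noteq> {}\<close> pos] by blast+
  moreover have "xb \<in> S pb"
    using yF yG S_def by force
  ultimately show ?thesis
    unfolding lipschitz_like_def lip_mod_def lipx_hat_def lipp_hat_def reg_mod_def by blast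
qed

end
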